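(* Let $h_1,h_2,g_1,g_2>0$ be real numbers. For $\Delta_1,\Delta_2>0$ and $\Omega\subseteq\{1,2\}$ define (all logarithms base $2$, $[x]^+=\max\{x,0\}$) \begin{align*} R(\emptyset;\Delta_1,\Delta_2)&=\Big[\log\Big(1+\tfrac{h_1^2}{1+\Delta_1}+\tfrac{h_2^2}{1+\Delta_2}\Big)\Big]^+,\\ R(\{1\};\Delta_1,\Delta_2)&=\Big[\log(1+g_1^2)+\log\Big(1+\tfrac{h_2^2}{1+\Delta_2}\Big)-\log\tfrac{1+\Delta_1}{\Delta_1}\Big]^+,\\ R(\{2\};\Delta_1,\Delta_2)&=\Big[\log(1+g_2^2)+\log\Big(1+\tfrac{h_1^2}{1+\Delta_1}\Big)-\log\tfrac{1+\Delta_2}{\Delta_2}\Big]^+,\\ R(\{1,2\};\Delta_1,\Delta_2)&=\Big[\log(1+g_1^2+g_2^2)-\log\tfrac{1+\Delta_1}{\Delta_1}-\log\tfrac{1+\Delta_2}{\Delta_2}\Big]^+. \end{align*} Let $$\delta_1:=\frac{(1+g_1^2+g_2^2)(1+h_1^2+h_2^2)+(1+g_2^2)h_1^2h_2^2}{g_2^2(1+g_1^2+g_2^2)(1+h_1^2)},\qquad \delta_2:=\frac{(1+g_1^2)(1+h_2^2)}{g_2^2},$$ and $\mathcal I_1=(0,\delta_1)$, $\mathcal I_2=[\delta_1,\delta_2)$, $\mathcal I_3=[\delta_2,\infty)$. Then $0<\delta_1<\delta_2$ (so the three intervals are nonempty), and for fixed $\Delta_2>0$, the optimizing $\Delta_1^*$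 of the max-min problem $\max_{\Delta_1>0}\min_{\Omega\subseteq\{1,2\}}R(\Omega;\Delta_1,\Delta_2)$ and the minimizing cut $\Omega^*$ at this optimum are: \begin{itemize} \item if $\Delta_2\in\mathcal I_1$: $\Delta_1^*=\frac{(1+g_2^2)(1+h_1^2)}{g_1^2}$, and $\Omega^*=\{1,2\}$ or $\{2\}$; \item if $\Delta_2\in\mathcal I_2$: $\Delta_1^*=\frac{(1+h_1^2)\Delta_2+(1+h_1^2+h_2^2)}{(g_1^2+g_2^2)\Delta_2-(1+h_2^2)}$, and $\Omega^*=\{1,2\}$ or $\emptyset$; \item if $\Delta_2\in\mathcal I_3$: $\Delta_1^*=\frac{(1+h_1^2)\Delta_2+(1+h_1^2+h_2^2)}{g_1^2(\Delta_2+(1+h_2^2))}$, and $\Omega^*=\{1\}$ or $\emptyset$. \end{itemize}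
   Context: This concerns the full-duplex two-relay Gaussian diamond network: source $S$, relays $A_1,A_2$, destination $D$, with channel magnitudes $h_i$ ($S\to A_i$) and $g_i$ ($A_i\to D$). Relay $i$ uses a Gaussian vector quantizer with distortion $\Delta_i$ (quantized signal $\hat Y_i=Y_i+\hat Z_i$, $\hat Z_i\sim\mathcal{CN}(0,\Delta_i)$), and $R(\Omega;\Delta_1,\Delta_2)$ is the resulting quantize-map-and-forward rate expression for the cut $\Omega$ (the QMF achievable rate is $\min_\Omega R(\Omega;\Delta_1,\Delta_2)$). *)

theory Defs
  imports Complex_Main
begin

definition pos_part :: "real \<Rightarrow> real" where
  "pos_part x = max x 0"

text \<open>QMF cut rate R(Omega; D1, D2) for the two-relay diamond network with channel
  gains h1 h2 g1 g2; cuts are subsets of {1,2}; logarithms base 2.\<close>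
definition qmf_R :: "real \<Rightarrow> real \<Rightarrow> real \<Rightarrow> real \<Rightarrow> nat set \<Rightarrow> real \<Rightarrow> real \<Rightarrow> real" where
  "qmf_R h1 h2 g1 g2 \<Omega> D1 D2 =
     (if \<Omega> = {} then pos_part (log 2 (1 + h1\<^sup>2 / (1 + D1) + h2\<^sup>2 / (1 + D2)))
      else if \<Omega> = {1} then pos_part (log 2 (1 + g1\<^sup>2) + log 2 (1 + h2\<^sup>2 / (1 + D2))
                                     - log 2 ((1 + D1) / D1))
      else if \<Omega> = {2} then pos_part (log 2 (1 + g2\<^sup>2) + log 2 (1 + h1\<^sup>2 / (1 + D1))
                                     - log 2 ((1 + D2) / D2))
      else pos_part (log 2 (1 + g1\<^sup>2 + g2\<^sup>2) - log 2 ((1 + D1) / D1) - log 2 ((1 + D2) / D2)))"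

definition qmf_minR :: "real \<Rightarrow> real \<Rightarrow> real \<Rightarrow> real \<Rightarrow> real \<Rightarrow> real \<Rightarrow> real" where
  "qmf_minR h1 h2 g1 g2 D1 D2 = Min ((\<lambda>\<Omega>. qmf_R h1 h2 g1 g2 \<Omega> D1 D2) ` Pow {1,2})"

definition qmf_opt :: "real \<Rightarrow> real \<Rightarrow> real \<Rightarrow> real \<Rightarrow> real \<Rightarrow> real \<Rightarrow> nat set set \<Rightarrow> bool" where
  "qmf_opt h1 h2 g1 g2 D2 D1s C \<longleftrightarrow>
     D1s > 0 \<and>
     (\<forall>D1>0. qmf_minR h1 h2 g1 g2 D1 D2 \<le> qmf_minR h1 h2 g1 g2 D1s D2) \<and>
     (\<forall>\<Omega>\<in>C. qmf_R h1 h2 g1 g2 \<Omega> D1s D2 = qmf_minR h1 h2 g1 g2 D1s D2)"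

end

theory Submission
  imports Defs
begin

text \<open>Every cut rate is the positive part of the logarithm of a rational function of
  \<open>\<Delta>\<^sub>1\<close>; this function is nondecreasing in \<open>\<Delta>\<^sub>1\<close> for the cuts \<open>{1}\<close> and \<open>{1,2}\<close>, which
  contain relay 1, and nonincreasing for \<open>{}\<close> and \<open>{2}\<close>. Hence the minimum over cuts is
  maximized at any \<open>\<Delta>\<^sub>1\<close> where an increasing and a decreasing rate cross while both are
  smallest among all four. In each of the three ranges of \<open>\<Delta>\<^sub>2\<close> the stated \<open>\<Delta>\<^sub>1\<^sup>*\<close> is the
  root of the equation between the two named cuts, and after clearing denominators the
  required comparisons with the other two cuts reduce to the sign of
  \<open>\<Delta>\<^sub>2 - \<delta>\<^sub>1\<close> or of \<open>\<Delta>\<^sub>2 - \<delta>\<^sub>2\<close>.\<close>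

definition qmf_gain :: "real \<Rightarrow> real \<Rightarrow> real \<Rightarrow> real \<Rightarrow> nat set \<Rightarrow> real \<Rightarrow> real \<Rightarrow> real" where
  "qmf_gain a b c d \<Omega> x y =
     (if \<Omega> = {} then 1 + a / (1 + x) + b / (1 + y)
      else if \<Omega> = {1} then (1 + c) * (1 + b / (1 + y)) * (x / (1 + x))
      else if \<Omega> = {2} then (1 + d) * (1 + a / (1 + x)) * (y / (1 + y))
      else (1 + c + d) * (x / (1 + x)) * (y / (1 + y)))"

lemma qmf_gain_simps:
  "qmf_gain a b c d {} x y = 1 + a / (1 + x) + b / (1 + y)"
  "qmf_gain a b c d {1} x y = (1 + c) * (1 + b / (1 + y)) * (x / (1 + x))"
  "qmf_gain a b c d {2} x y = (1 + d) * (1 + a / (1 + x)) * (y / (1 + y))"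
  "qmf_gain a b c d {1,2} x y = (1 + c + d) * (x / (1 + x)) * (y / (1 + y))"
  by (simp_all add: qmf_gain_def)

definition qmf_delta1 :: "real \<Rightarrow> real \<Rightarrow> real \<Rightarrow> real \<Rightarrow> real" where
  "qmf_delta1 a b c d = ((1 + c + d) * (1 + a + b) + (1 + d) * a * b) / (d * (1 + c + d) * (1 + a))"

definition qmf_delta2 :: "real \<Rightarrow> real \<Rightarrow> real \<Rightarrow> real" where
  "qmf_delta2 b c d = (1 + c) * (1 + b) / d"

subsection \<open>Cut rates as logarithms of gains\<close>

lemma qmf_R_eq_log_gain:
  assumes "x > 0" "y > 0"
  shows "qmf_R h1 h2 g1 g2 \<Omega> x y = pos_part (log 2 (qmf_gain (h1\<^sup>2) (h2\<^sup>2) (g1\<^sup>2) (g2\<^sup>2) \<Omega> x y))"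
proof -
  have pos: "0 < 1 + h2\<^sup>2 / (1 + y)" "0 < 1 + h1\<^sup>2 / (1 + x)" "0 < (1 + x) / x" "0 < (1 + y) / y"
      "0 < 1 + g1\<^sup>2" "0 < 1 + g2\<^sup>2" "0 < 1 + g1\<^sup>2 + g2\<^sup>2"
    using assms by (auto intro!: add_pos_nonneg)
  consider "\<Omega> = {}" | "\<Omega> = {1}" | "\<Omega> = {2}" | "\<Omega> \<notin> {{}, {1}, {2}}" by auto
  then show ?thesis
    by cases (use assms pos in \<open>simp add: qmf_R_def qmf_gain_def log_mult log_divide,
      simp add: algebra_simps\<close>)+
qed

lemma pos_part_log_mono: "0 < t \<Longrightarrow> t \<le> s \<Longrightarrow> pos_part (log 2 t) \<le> pos_part (log 2 s)"
  unfolding pos_part_def by (simp add: max.coboundedI1 max_def)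

lemma qmf_gain_pos:
  assumes "a \<ge> 0" "b \<ge> 0" "c \<ge> 0" "d \<ge> 0" "x > 0" "y > 0"
  shows "qmf_gain a b c d \<Omega> x y > 0"
  using assms by (auto simp: qmf_gain_def intro!: add_pos_nonneg mult_pos_pos divide_pos_pos)

lemma qmf_gain_mono:
  assumes "a \<ge> 0" "b \<ge> 0" "c \<ge> 0" "d \<ge> 0" "x > 0" "y > 0" "x \<le> x'"
  shows "\<Omega> \<in> {{1}, {1,2}} \<Longrightarrow> qmf_gain a b c d \<Omega> x y \<le> qmf_gain a b c d \<Omega> x' y"
    and "\<Omega> \<in> {{}, {2}} \<Longrightarrow> qmf_gain a b c d \<Omega> x' y \<le> qmf_gain a b c d \<Omega> x y"
proof -
  have frac: "x / (1 + x) \<le> x' / (1 + x')"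
    using assms by (simp add: divide_simps) (simp add: algebra_simps)
  have inv: "a / (1 + x') \<le> a / (1 + x)"
    using assms by (simp add: divide_left_mono)
  have "(1 + c) * (1 + b / (1 + y)) * (x / (1 + x)) \<le> (1 + c) * (1 + b / (1 + y)) * (x' / (1 + x'))"
    by (rule mult_left_mono[OF frac]) (use assms in simp)
  moreover have "(1 + c + d) * (x / (1 + x)) * (y / (1 + y)) \<le> (1 + c + d) * (x' / (1 + x')) * (y / (1 + y))"
    by (intro mult_right_mono mult_left_mono frac) (use assms in simp_all)
  ultimately show "\<Omega> \<in> {{1}, {1,2}} \<Longrightarrow> qmf_gain a b c d \<Omega> x y \<le> qmf_gain a b c d \<Omega> x' y"
    by (auto simp only: insert_iff empty_iff qmf_gain_simps)
  have "1 + a / (1 + x') + b / (1 + y) \<le> 1 + a / (1 + x) + b / (1 + y)"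
    using inv by simp
  moreover have "(1 + d) * (1 + a / (1 + x')) * (y / (1 + y)) \<le> (1 + d) * (1 + a / (1 + x)) * (y / (1 + y))"
    by (intro mult_right_mono mult_left_mono) (use assms inv in simp_all)
  ultimately show "\<Omega> \<in> {{}, {2}} \<Longrightarrow> qmf_gain a b c d \<Omega> x' y \<le> qmf_gain a b c d \<Omega> x y"
    by (auto simp only: insert_iff empty_iff qmf_gain_simps)
qed

lemma qmf_gain_cleared:
  assumes "x > 0" "y > 0"
  shows "(1 + x) * (1 + y) * qmf_gain a b c d {} x y = (1 + x + a) * (1 + y) + b * (1 + x)"
    and "(1 + x) * (1 + y) * qmf_gain a b c d {1} x y = (1 + c) * (1 + b + y) * x"
    and "(1 + x) * (1 + y) * qmf_gain a b c d {2} x y = (1 + d) * (1 + a + x) * y"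
    and "(1 + x) * (1 + y) * qmf_gain a b c d {1,2} x y = (1 + c + d) * x * y"
proof -
  have "1 + x \<noteq> 0" "1 + y \<noteq> 0" "1 + (x + (y + x * y)) \<noteq> 0"
    using assms mult_pos_pos[OF assms] by linarith+
  then show "(1 + x) * (1 + y) * qmf_gain a b c d {} x y = (1 + x + a) * (1 + y) + b * (1 + x)"
    and "(1 + x) * (1 + y) * qmf_gain a b c d {1} x y = (1 + c) * (1 + b + y) * x"
    and "(1 + x) * (1 + y) * qmf_gain a b c d {2} x y = (1 + d) * (1 + a + x) * y"
    and "(1 + x) * (1 + y) * qmf_gain a b c d {1,2} x y = (1 + c + d) * x * y"
    by (simp_all add: qmf_gain_def field_simps)
qed

lemma qmf_gain_le_iff_cleared:
  assumes "x > 0" "y > 0"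
  shows "qmf_gain a b c d \<Omega> x y \<le> qmf_gain a b c d \<Theta> x y \<longleftrightarrow>
         (1 + x) * (1 + y) * qmf_gain a b c d \<Omega> x y \<le> (1 + x) * (1 + y) * qmf_gain a b c d \<Theta> x y"
  using assms by (simp add: mult_le_cancel_left_pos)

lemma qmf_gain_12_le_1_iff:
  assumes "x > 0" "y > 0"
  shows "qmf_gain a b c d {1,2} x y \<le> qmf_gain a b c d {1} x y \<longleftrightarrow> d * y \<le> (1 + c) * (1 + b)"
proof -
  have "qmf_gain a b c d {1,2} x y \<le> qmf_gain a b c d {1} x y \<longleftrightarrow>
        0 \<le> (1 + c) * (1 + b + y) * x - (1 + c + d) * x * y"
    unfolding qmf_gain_le_iff_cleared[OF assms] qmf_gain_cleared[OF assms] by simp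
  also have "\<dots> \<longleftrightarrow> 0 \<le> x * ((1 + c) * (1 + b) - d * y)"
    by (simp add: algebra_simps)
  finally show ?thesis using assms by (simp add: zero_le_mult_iff)
qed

lemma qmf_gain_1_le_12_iff:
  assumes "x > 0" "y > 0"
  shows "qmf_gain a b c d {1} x y \<le> qmf_gain a b c d {1,2} x y \<longleftrightarrow> (1 + c) * (1 + b) \<le> d * y"
proof -
  have "qmf_gain a b c d {1} x y \<le> qmf_gain a b c d {1,2} x y \<longleftrightarrow>
        0 \<le> (1 + c + d) * x * y - (1 + c) * (1 + b + y) * x"
    unfolding qmf_gain_le_iff_cleared[OF assms] qmf_gain_cleared[OF assms] by simp
  also have "\<dots> \<longleftrightarrow> 0 \<le> x * (d * y - (1 + c) * (1 + b))"
    by (simp add: algebra_simps)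
  finally show ?thesis using assms by (simp add: zero_le_mult_iff)
qed

lemma qmf_gain_2_le_empty_iff:
  assumes "x > 0" "y > 0"
  shows "qmf_gain a b c d {2} x y \<le> qmf_gain a b c d {} x y \<longleftrightarrow> (1 + a + x) * (d * y - 1) \<le> b * (1 + x)"
proof -
  have "(1 + d) * (1 + a + x) * y - ((1 + x + a) * (1 + y) + b * (1 + x))
        = (1 + a + x) * (d * y - 1) - b * (1 + x)"
    by algebra
  then show ?thesis
    unfolding qmf_gain_le_iff_cleared[OF assms] qmf_gain_cleared[OF assms] by linarith
qed

lemma qmf_gain_empty_le_2_iff:
  assumes "x > 0" "y > 0"
  shows "qmf_gain a b c d {} x y \<le> qmf_gain a b c d {2} x y \<longleftrightarrow> b * (1 + x) \<le> (1 + a + x) * (d * y - 1)"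
proof -
  have "(1 + d) * (1 + a + x) * y - ((1 + x + a) * (1 + y) + b * (1 + x))
        = (1 + a + x) * (d * y - 1) - b * (1 + x)"
    by algebra
  then show ?thesis
    unfolding qmf_gain_le_iff_cleared[OF assms] qmf_gain_cleared[OF assms] by linarith
qed

subsection \<open>Max-min at a crossing of an increasing and a decreasing cut\<close>

lemma qmf_minR_le:
  "\<Omega> \<in> Pow {1,2} \<Longrightarrow> qmf_minR h1 h2 g1 g2 x y \<le> qmf_R h1 h2 g1 g2 \<Omega> x y"
  unfolding qmf_minR_def by (rule Min_le) auto

lemma qmf_minR_eqI:
  assumes "\<Omega> \<in> Pow {1,2}" "\<forall>\<Theta>\<in>Pow {1,2}. qmf_R h1 h2 g1 g2 \<Omega> x y \<le> qmf_R h1 h2 g1 g2 \<Theta> x y"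
  shows "qmf_minR h1 h2 g1 g2 x y = qmf_R h1 h2 g1 g2 \<Omega> x y"
  unfolding qmf_minR_def using assms by (intro Min_eqI) auto

lemma qmf_opt_at_crossing:
  fixes h1 h2 g1 g2 :: real
  defines "G \<equiv> qmf_gain (h1\<^sup>2) (h2\<^sup>2) (g1\<^sup>2) (g2\<^sup>2)"
  assumes "x > 0" "y > 0"
    and inc: "\<Omega> \<in> {{1}, {1,2}}" and dec: "\<Omega>' \<in> {{}, {2}}"
    and cross: "G \<Omega> x y = G \<Omega>' x y"
    and least: "\<forall>\<Theta>\<in>Pow {1,2}. G \<Omega> x y \<le> G \<Theta> x y"
  shows "qmf_opt h1 h2 g1 g2 y x {\<Omega>, \<Omega>'}"
proof -
  let ?R = "\<lambda>\<Theta> x. qmf_R h1 h2 g1 g2 \<Theta> x y"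
  let ?m = "\<lambda>x. qmf_minR h1 h2 g1 g2 x y"
  have R: "?R \<Theta> x' = pos_part (log 2 (G \<Theta> x' y))" if "x' > 0" for \<Theta> x'
    unfolding G_def using that \<open>y > 0\<close> by (rule qmf_R_eq_log_gain)
  have G_pos: "G \<Theta> x' y > 0" if "x' > 0" for \<Theta> x'
    unfolding G_def using that \<open>y > 0\<close> by (intro qmf_gain_pos) auto
  have G_mono: "G \<Omega> x1 y \<le> G \<Omega> x2 y" "G \<Omega>' x2 y \<le> G \<Omega>' x1 y"
    if "x1 > 0" "x1 \<le> x2" for x1 x2
    unfolding G_def using qmf_gain_mono that \<open>y > 0\<close> inc dec by simp_all
  have cuts: "\<Omega> \<in> Pow {1,2}" "\<Omega>' \<in> Pow {1,2}" using inc dec by auto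
  have m_x: "?m x = ?R \<Omega> x"
    using cuts least \<open>x > 0\<close> by (intro qmf_minR_eqI) (auto simp: R intro: pos_part_log_mono G_pos)
  have "?m x' \<le> ?m x" if "x' > 0" for x'
  proof (cases "x' \<le> x")
    case True
    have "?m x' \<le> ?R \<Omega> x'" using cuts(1) by (rule qmf_minR_le)
    also have "\<dots> \<le> ?R \<Omega> x"
      using True that by (simp add: R pos_part_log_mono G_pos G_mono)
    finally show ?thesis using m_x by simp
  next
    case False
    have "?m x' \<le> ?R \<Omega>' x'" using cuts(2) by (rule qmf_minR_le)
    also have "\<dots> \<le> ?R \<Omega>' x"
      using False that \<open>x > 0\<close> by (simp add: R pos_part_log_mono G_pos G_mono)
    finally show ?thesis using m_x cross \<open>x > 0\<close> by (simp add: R)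
  qed
  then show ?thesis
    unfolding qmf_opt_def using \<open>x > 0\<close> m_x cross by (simp add: R)
qed

lemma ball_Pow_one_two: "(\<forall>\<Theta>\<in>Pow {1, 2::nat}. P \<Theta>) \<longleftrightarrow> P {} \<and> P {1} \<and> P {2} \<and> P {1,2}"
  by (auto simp: Pow_insert)

lemma qmf_delta1_pos:
  assumes "a \<ge> 0" "b \<ge> 0" "c \<ge> 0" "d > 0"
  shows "0 < qmf_delta1 a b c d"
  using assms unfolding qmf_delta1_def by (intro divide_pos_pos add_pos_nonneg) auto

lemma qmf_delta1_less_delta2:
  assumes "a \<ge> 0" "b \<ge> 0" "c > 0" "d > 0"
  shows "qmf_delta1 a b c d < qmf_delta2 b c d"
proof -
  have K: "d * (1 + c + d) * (1 + a) > 0" using assms by simp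
  have "(1 + c + d) * (1 + a + b) + (1 + d) * a * b
        < (1 + c) * (1 + b) * ((1 + c + d) * (1 + a))"
  proof -
    have "(1 + c) * (1 + b) * ((1 + c + d) * (1 + a)) - ((1 + c + d) * (1 + a + b) + (1 + d) * a * b)
          = c * a * b + c * (1 + c + d) * (1 + a) * (1 + b)"
      by (simp add: algebra_simps)
    also have "\<dots> > 0" using assms by (intro add_nonneg_pos) auto
    finally show ?thesis by simp
  qed
  then have "qmf_delta1 a b c d < (1 + c) * (1 + b) * ((1 + c + d) * (1 + a)) / (d * (1 + c + d) * (1 + a))"
    unfolding qmf_delta1_def using K by (rule divide_strict_right_mono)
  also have "\<dots> = qmf_delta2 b c d"
    unfolding qmf_delta2_def using assms
      nonzero_mult_divide_mult_cancel_right[of "(1 + c + d) * (1 + a)" "(1 + c) * (1 + b)" d]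
    by (simp add: mult.assoc)
  finally show ?thesis .
qed

lemma qmf_crossing_low:
  fixes a b c d y :: real
  defines "G \<equiv> qmf_gain a b c d" and "x \<equiv> (1 + d) * (1 + a) / c"
  assumes "a \<ge> 0" "b \<ge> 0" "c > 0" "d > 0" and y: "0 < y" and "y < qmf_delta1 a b c d"
  shows "x > 0" and "G {1,2} x y = G {2} x y" and "\<forall>\<Theta>\<in>Pow {1,2}. G {1,2} x y \<le> G \<Theta> x y"
proof -
  show x: "x > 0" unfolding x_def using assms by simp
  have cx: "c * x = (1 + d) * (1 + a)" unfolding x_def using assms by simp
  have "(1 + c + d) * x * y = (1 + d) * (1 + a + x) * y + (c * x - (1 + d) * (1 + a)) * y"
    by (simp add: algebra_simps)
  then have "(1 + x) * (1 + y) * G {1,2} x y = (1 + x) * (1 + y) * G {2} x y"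
    unfolding G_def qmf_gain_cleared[OF x y] using cx by simp
  then show cross: "G {1,2} x y = G {2} x y" using x y by simp
  have "y < qmf_delta2 b c d" using assms qmf_delta1_less_delta2 by fastforce
  then have "G {1,2} x y \<le> G {1} x y"
    unfolding G_def qmf_gain_12_le_1_iff[OF x y] qmf_delta2_def
    using assms by (simp add: pos_less_divide_eq mult.commute)
  moreover have "G {2} x y \<le> G {} x y"
  proof -
    have "y * (d * (1 + c + d) * (1 + a)) < (1 + c + d) * (1 + a + b) + (1 + d) * a * b"
      using assms unfolding qmf_delta1_def by (simp add: pos_less_divide_eq)
    moreover have "c * (b * (1 + x) - (1 + a + x) * (d * y - 1))
        = b * (c + c * x) - (c * (1 + a) + c * x) * (d * y - 1)"
      by (simp add: algebra_simps)
    moreover have "\<dots> = (1 + c + d) * (1 + a + b) + (1 + d) * a * b - y * (d * (1 + c + d) * (1 + a))"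
      unfolding cx by (simp add: algebra_simps)
    ultimately have "0 < c * (b * (1 + x) - (1 + a + x) * (d * y - 1))" by simp
    then show ?thesis
      unfolding G_def qmf_gain_2_le_empty_iff[OF x y]
      using assms by (simp add: zero_less_mult_iff)
  qed
  ultimately show "\<forall>\<Theta>\<in>Pow {1,2}. G {1,2} x y \<le> G \<Theta> x y"
    unfolding ball_Pow_one_two using cross by simp
qed

lemma qmf_crossing_mid:
  fixes a b c d y :: real
  defines "G \<equiv> qmf_gain a b c d"
    and "x \<equiv> ((1 + a) * y + (1 + a + b)) / ((c + d) * y - (1 + b))"
  assumes "a \<ge> 0" "b \<ge> 0" "c > 0" "d > 0" "qmf_delta1 a b c d \<le> y" "y < qmf_delta2 b c d"
  shows "x > 0" and "G {1,2} x y = G {} x y" and "\<forall>\<Theta>\<in>Pow {1,2}. G {1,2} x y \<le> G \<Theta> x y"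
proof -
  define K where "K = d * (1 + c + d) * (1 + a)"
  define num where "num = (1 + c + d) * (1 + a + b) + (1 + d) * a * b"
  define M where "M = (c + d) * y - (1 + b)"
  have K: "K > 0" unfolding K_def using assms by simp
  have yK: "num \<le> y * K"
    using assms K unfolding qmf_delta1_def K_def num_def by (simp add: pos_divide_le_eq)
  have y: "y > 0"
    using qmf_delta1_pos[of a b c d] assms by linarith
  have "M * K = (c + d) * (y * K - num) + c * ((1 + c + d) * (1 + a + b) + a * b)"
    unfolding M_def K_def num_def by (simp add: algebra_simps)
  also have "\<dots> > 0"
    using assms yK by (intro add_nonneg_pos mult_pos_pos add_pos_nonneg) auto
  finally have M: "M > 0" using K by (simp add: zero_less_mult_iff)
  show x: "x > 0" unfolding x_def M_def[symmetric] using assms y M by (simp add: add_pos_nonneg)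
  have Mx: "M * x = (1 + a) * y + (1 + a + b)" unfolding x_def M_def[symmetric] using M by simp
  have "(1 + c + d) * x * y = (1 + x + a) * (1 + y) + b * (1 + x) + (M * x - ((1 + a) * y + (1 + a + b)))"
    unfolding M_def by (simp add: algebra_simps)
  then have "(1 + x) * (1 + y) * G {1,2} x y = (1 + x) * (1 + y) * G {} x y"
    unfolding G_def qmf_gain_cleared[OF x y] using Mx by simp
  then show cross: "G {1,2} x y = G {} x y" using x y by simp
  have "G {1,2} x y \<le> G {1} x y"
    unfolding G_def qmf_gain_12_le_1_iff[OF x y]
    using assms unfolding qmf_delta2_def by (simp add: pos_less_divide_eq mult.commute)
  moreover have "G {} x y \<le> G {2} x y"
  proof -
    have "M * ((1 + a + x) * (d * y - 1) - b * (1 + x))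
        = (M * (1 + a) + M * x) * (d * y - 1) - b * (M + M * x)"
      by (simp add: algebra_simps)
    also have "\<dots> = y * (y * K - num)"
      unfolding Mx unfolding M_def K_def num_def by (simp add: algebra_simps)
    finally have "M * ((1 + a + x) * (d * y - 1) - b * (1 + x)) = y * (y * K - num)" .
    moreover have "0 \<le> y * (y * K - num)" using y yK by simp
    ultimately have "0 \<le> M * ((1 + a + x) * (d * y - 1) - b * (1 + x))" by simp
    then have "0 \<le> (1 + a + x) * (d * y - 1) - b * (1 + x)"
      using M by (simp add: zero_le_mult_iff)
    then show ?thesis unfolding G_def qmf_gain_empty_le_2_iff[OF x y] by simp
  qed
  ultimately show "\<forall>\<Theta>\<in>Pow {1,2}. G {1,2} x y \<le> G \<Theta> x y"
    unfolding ball_Pow_one_two using cross by simp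
qed

lemma qmf_crossing_high:
  fixes a b c d y :: real
  defines "G \<equiv> qmf_gain a b c d"
    and "x \<equiv> ((1 + a) * y + (1 + a + b)) / (c * (y + (1 + b)))"
  assumes "a \<ge> 0" "b \<ge> 0" "c > 0" "d > 0" "qmf_delta2 b c d \<le> y"
  shows "x > 0" and "G {1} x y = G {} x y" and "\<forall>\<Theta>\<in>Pow {1,2}. G {1} x y \<le> G \<Theta> x y"
proof -
  have dy: "(1 + c) * (1 + b) \<le> d * y"
    using assms unfolding qmf_delta2_def by (simp add: pos_divide_le_eq mult.commute)
  have "0 < (1 + c) * (1 + b)" using assms by simp
  then have "0 < d * y" using dy by linarith
  then have y: "y > 0" using assms by (simp add: zero_less_mult_iff)
  define W where "W = c * (y + (1 + b))"
  have W: "W > 0" unfolding W_def using assms y by simp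
  show x: "x > 0" unfolding x_def W_def[symmetric] using assms y W by (simp add: add_pos_nonneg)
  have Wx: "W * x = (1 + a) * y + (1 + a + b)" unfolding x_def W_def[symmetric] using W by simp
  have "(1 + c) * (1 + b + y) * x = (1 + x + a) * (1 + y) + b * (1 + x) + (W * x - ((1 + a) * y + (1 + a + b)))"
    unfolding W_def by (simp add: algebra_simps)
  then have "(1 + x) * (1 + y) * G {1} x y = (1 + x) * (1 + y) * G {} x y"
    unfolding G_def qmf_gain_cleared[OF x y] using Wx by simp
  then show cross: "G {1} x y = G {} x y" using x y by simp
  have "G {1} x y \<le> G {1,2} x y"
    unfolding G_def qmf_gain_1_le_12_iff[OF x y] by (fact dy)
  moreover have "G {} x y \<le> G {2} x y"
  proof -
    have "1 + b \<le> (1 + c) * (1 + b)" using assms mult_nonneg_nonneg[of c b] by (simp add: algebra_simps)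
    then have "b \<le> d * y - 1" using dy by linarith
    then have "b * (1 + x) \<le> (d * y - 1) * (1 + a + x)"
      using assms x by (intro mult_mono) auto
    then show ?thesis unfolding G_def qmf_gain_empty_le_2_iff[OF x y] by (simp add: mult.commute)
  qed
  ultimately show "\<forall>\<Theta>\<in>Pow {1,2}. G {1} x y \<le> G \<Theta> x y"
    unfolding ball_Pow_one_two using cross by simp
qed

theorem lemma1:
  fixes h1 h2 g1 g2 :: real
  assumes "h1 > 0" "h2 > 0" "g1 > 0" "g2 > 0"
  defines "\<delta>1 \<equiv> ((1 + g1\<^sup>2 + g2\<^sup>2) * (1 + h1\<^sup>2 + h2\<^sup>2) + (1 + g2\<^sup>2) * h1\<^sup>2 * h2\<^sup>2)
                  / (g2\<^sup>2 * (1 + g1\<^sup>2 + g2\<^sup>2) * (1 + h1\<^sup>2))"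
      and "\<delta>2 \<equiv> (1 + g1\<^sup>2) * (1 + h2\<^sup>2) / g2\<^sup>2"
  shows "0 < \<delta>1 \<and> \<delta>1 < \<delta>2 \<and>
    (\<forall>D2. 0 < D2 \<and> D2 < \<delta>1 \<longrightarrow>
       qmf_opt h1 h2 g1 g2 D2 ((1 + g2\<^sup>2) * (1 + h1\<^sup>2) / g1\<^sup>2) {{1,2}, {2}}) \<and>
    (\<forall>D2. \<delta>1 \<le> D2 \<and> D2 < \<delta>2 \<longrightarrow>
       qmf_opt h1 h2 g1 g2 D2
         (((1 + h1\<^sup>2) * D2 + (1 + h1\<^sup>2 + h2\<^sup>2)) / ((g1\<^sup>2 + g2\<^sup>2) * D2 - (1 + h2\<^sup>2))) {{1,2}, {}}) \<and>
    (\<forall>D2. \<delta>2 \<le> D2 \<longrightarrow>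
       qmf_opt h1 h2 g1 g2 D2
         (((1 + h1\<^sup>2) * D2 + (1 + h1\<^sup>2 + h2\<^sup>2)) / (g1\<^sup>2 * (D2 + (1 + h2\<^sup>2)))) {{1}, {}})"
proof -
  have sq: "h1\<^sup>2 \<ge> 0" "h2\<^sup>2 \<ge> 0" "g1\<^sup>2 > 0" "g2\<^sup>2 > 0" using assms(3,4) by auto
  have \<delta>: "\<delta>1 = qmf_delta1 (h1\<^sup>2) (h2\<^sup>2) (g1\<^sup>2) (g2\<^sup>2)" "\<delta>2 = qmf_delta2 (h2\<^sup>2) (g1\<^sup>2) (g2\<^sup>2)"
    unfolding \<delta>1_def \<delta>2_def qmf_delta1_def qmf_delta2_def by simp_all
  have "0 < \<delta>1" "\<delta>1 < \<delta>2"
    unfolding \<delta> using sq by (simp_all add: qmf_delta1_pos qmf_delta1_less_delta2)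
  moreover have "qmf_opt h1 h2 g1 g2 y ((1 + g2\<^sup>2) * (1 + h1\<^sup>2) / g1\<^sup>2) {{1,2}, {2}}"
    if "0 < y" "y < \<delta>1" for y
  proof -
    note crossing = qmf_crossing_low[OF sq that[unfolded \<delta>]]
    show ?thesis by (rule qmf_opt_at_crossing[OF crossing(1) that(1) _ _ crossing(2,3)]) simp_all
  qed
  moreover have "qmf_opt h1 h2 g1 g2 y
      (((1 + h1\<^sup>2) * y + (1 + h1\<^sup>2 + h2\<^sup>2)) / ((g1\<^sup>2 + g2\<^sup>2) * y - (1 + h2\<^sup>2))) {{1,2}, {}}"
    if "\<delta>1 \<le> y" "y < \<delta>2" for y
  proof -
    note crossing = qmf_crossing_mid[OF sq that[unfolded \<delta>]]
    have "0 < y" using \<open>0 < \<delta>1\<close> that by linarith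
    show ?thesis by (rule qmf_opt_at_crossing[OF crossing(1) \<open>0 < y\<close> _ _ crossing(2,3)]) simp_all
  qed
  moreover have "qmf_opt h1 h2 g1 g2 y
      (((1 + h1\<^sup>2) * y + (1 + h1\<^sup>2 + h2\<^sup>2)) / (g1\<^sup>2 * (y + (1 + h2\<^sup>2)))) {{1}, {}}"
    if "\<delta>2 \<le> y" for y
  proof -
    note crossing = qmf_crossing_high[OF sq that[unfolded \<delta>]]
    have "0 < y" using \<open>0 < \<delta>1\<close> \<open>\<delta>1 < \<delta>2\<close> that by linarith
    show ?thesis by (rule qmf_opt_at_crossing[OF crossing(1) \<open>0 < y\<close> _ _ crossing(2,3)]) simp_all
  qed
  ultimately show ?thesis by (intro conjI allI impI) (simp_all only: conj_imp_eq_imp_imp)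
qed

end
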